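(* Let $n\ge1$ and on $\mathbb{D}^n$ (coordinates $\alpha_0,\dots,\alpha_{n-1}$) use the Poisson bracket described in the context. Let $\Phi_k$ be the monic orthogonal polynomials on the unit circle and $\Phi_k^*$ their reversed polynomials. Then for all $z,w$, \[ \{\Phi_{n-1}(z),\Phi_n(w)\}=-i\bar\alpha_{n-1}\,w\,\frac{\Phi_{n-1}(z)\Phi_{n-1}^*(w)-\Phi_{n-1}(w)\Phi_{n-1}^*(z)}{z-w}, \] \[ \{\Phi_n(z),\Phi_{n-1}^*(w)\}=i\,zw\,\frac{\Phi_{n-1}(z)\Phi_{n-1}^*(w)-\Phi_{n-1}(w)\Phi_{n-1}^*(z)}{z-w}. \]
   Context: Let $\rho_j=(1-|\alpha_j|^2)^{1/2}$; the Poisson bracket is $\{f,g\}=\sum_{j=0}^{n-1}i\rho_j^2\bigl(\frac{\partial f}{\partial\bar\alpha_j}\frac{\partial g}{\partial\alpha_j}-\frac{\partial f}{\partial\alpha_j}\frac{\partial g}{\partial\bar\alpha_j}\bigr)$ (Wirtinger derivatives), i.e. $\{\alpha_j,\alpha_k\}=0$, $\{\alpha_j,\bar\alpha_k\}=-i\rho_j^2\delta_{jk}$; $z,w$ are held fixed. $\Phi_0=1$, $\Phi_{k+1}(z)=z\Phi_k(z)-\bar\alpha_k\Phi_k^*(z)$, $\Phi_k^*(z)=z^k\overline{\Phi_k(1/\bar z)}$. The identities are identities of polynomials in $z,w$. *)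

theory Defs
  imports "HOL-Analysis.Analysis" "HOL-Computational_Algebra.Polynomial"
begin

text \<open>Points of the polydisc are functions a :: nat => complex (only a 0 .. a (n-1) matter).
Real partial derivatives in the real and imaginary directions of coordinate j.\<close>

definition pd_re :: "((nat \<Rightarrow> complex) \<Rightarrow> complex) \<Rightarrow> (nat \<Rightarrow> complex) \<Rightarrow> nat \<Rightarrow> complex" where
  "pd_re f a j = vector_derivative (\<lambda>t::real. f (a(j := a j + of_real t))) (at 0)"

definition pd_im :: "((nat \<Rightarrow> complex) \<Rightarrow> complex) \<Rightarrow> (nat \<Rightarrow> complex) \<Rightarrow> nat \<Rightarrow> complex" where
  "pd_im f a j = vector_derivative (\<lambda>t::real. f (a(j := a j + \<i> * of_real t))) (at 0)"

definition wirt :: "((nat \<Rightarrow> complex) \<Rightarrow> complex) \<Rightarrow> (nat \<Rightarrow> complex) \<Rightarrow> nat \<Rightarrow> complex" where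
  "wirt f a j = (pd_re f a j - \<i> * pd_im f a j) / 2"

definition wirt_bar :: "((nat \<Rightarrow> complex) \<Rightarrow> complex) \<Rightarrow> (nat \<Rightarrow> complex) \<Rightarrow> nat \<Rightarrow> complex" where
  "wirt_bar f a j = (pd_re f a j + \<i> * pd_im f a j) / 2"

definition pbracket :: "nat \<Rightarrow> ((nat \<Rightarrow> complex) \<Rightarrow> complex) \<Rightarrow> ((nat \<Rightarrow> complex) \<Rightarrow> complex)
    \<Rightarrow> (nat \<Rightarrow> complex) \<Rightarrow> complex" where
  "pbracket n f g a = (\<Sum>j<n. \<i> * of_real (1 - (cmod (a j))\<^sup>2) *
       (wirt_bar f a j * wirt g a j - wirt f a j * wirt_bar g a j))"

text \<open>Reversed polynomial of degree-k polynomial p: z^k * conj(p(1/conj z)), written as a polynomial.\<close>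
definition rev_star :: "nat \<Rightarrow> complex poly \<Rightarrow> complex poly" where
  "rev_star k p = (\<Sum>j\<le>k. monom (cnj (coeff p (k - j))) j)"

text \<open>Monic orthogonal polynomials via the Szego recursion with Verblunsky coefficients a.\<close>
fun Phi :: "(nat \<Rightarrow> complex) \<Rightarrow> nat \<Rightarrow> complex poly" where
  "Phi a 0 = 1"
| "Phi a (Suc k) = pCons 0 (Phi a k) - smult (cnj (a k)) (rev_star k (Phi a k))"

definition Phi_star :: "(nat \<Rightarrow> complex) \<Rightarrow> nat \<Rightarrow> complex poly" where
  "Phi_star a k = rev_star k (Phi a k)"

end

theory Submission
  imports Defs
begin

(*
  Write the Szego recursion as Phi_{k+1}(z) = z Phi_k(z) - conj(alpha_k) Phi*_k(z) and
  Phi*_{k+1}(z) = Phi*_k(z) - alpha_k z Phi_k(z), and note that Phi_k and Phi*_k depend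
  only on alpha_0, ..., alpha_{k-1}.  By induction on k, for the bracket over the first
  k coordinates,
    {Phi_k(z), Phi_k(w)} = {Phi*_k(z), Phi*_k(w)} = 0,
    (z - w) {Phi_k(z), Phi*_k(w)} = i w (Phi_k(z) Phi*_k(w) - Phi_k(w) Phi*_k(z)).
  In the step, the bracket over k + 1 coordinates is the old bracket, expanded
  bilinearly through the recursion, plus the contribution of alpha_k, which enters
  Phi_{k+1} only through conj(alpha_k) and Phi*_{k+1} only through alpha_k.  One more
  application of the recursion then gives both identities.
*)

(* df and dbf play the roles of d/d(a j) and d/d(cnj (a j)):
   with a j = x + i y, d/dx = d + dbar and d/dy = i (d - dbar). *)
definition has_wirtinger_derivs ::
    "((nat \<Rightarrow> complex) \<Rightarrow> complex) \<Rightarrow> ((nat \<Rightarrow> complex) \<Rightarrow> nat \<Rightarrow> complex)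
      \<Rightarrow> ((nat \<Rightarrow> complex) \<Rightarrow> nat \<Rightarrow> complex) \<Rightarrow> bool" where
  "has_wirtinger_derivs f df dbf \<longleftrightarrow> (\<forall>a j.
     ((\<lambda>t::real. f (a(j := a j + of_real t))) has_vector_derivative (df a j + dbf a j)) (at 0) \<and>
     ((\<lambda>t::real. f (a(j := a j + \<i> * of_real t)))
        has_vector_derivative (\<i> * (df a j - dbf a j))) (at 0))"

lemma has_wirtinger_derivsD:
  assumes "has_wirtinger_derivs f df dbf"
  shows "((\<lambda>t::real. f (a(j := a j + of_real t))) has_vector_derivative (df a j + dbf a j)) (at 0)"
    and "((\<lambda>t::real. f (a(j := a j + \<i> * of_real t)))
           has_vector_derivative (\<i> * (df a j - dbf a j))) (at 0)"
  using assms unfolding has_wirtinger_derivs_def by blast+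

lemma has_wirtinger_derivs_wirt:
  assumes "has_wirtinger_derivs f df dbf"
  shows "wirt f a j = df a j" and "wirt_bar f a j = dbf a j"
proof -
  have re: "pd_re f a j = df a j + dbf a j"
    unfolding pd_re_def by (rule vector_derivative_at[OF has_wirtinger_derivsD(1)[OF assms]])
  have im: "pd_im f a j = \<i> * (df a j - dbf a j)"
    unfolding pd_im_def by (rule vector_derivative_at[OF has_wirtinger_derivsD(2)[OF assms]])
  show "wirt f a j = df a j" "wirt_bar f a j = dbf a j"
    unfolding wirt_def wirt_bar_def re im by (simp_all add: algebra_simps)
qed

lemma has_wirtinger_derivs_const: "has_wirtinger_derivs (\<lambda>b. c) (\<lambda>a j. 0) (\<lambda>a j. 0)"
  unfolding has_wirtinger_derivs_def by simp

lemma has_wirtinger_derivs_coord: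
  "has_wirtinger_derivs (\<lambda>b. b k) (\<lambda>a j. if j = k then 1 else 0) (\<lambda>a j. 0)"
  unfolding has_wirtinger_derivs_def
  by (auto intro!: derivative_eq_intros)

lemma has_wirtinger_derivs_cnj:
  assumes "has_wirtinger_derivs f df dbf"
  shows "has_wirtinger_derivs (\<lambda>b. cnj (f b)) (\<lambda>a j. cnj (dbf a j)) (\<lambda>a j. cnj (df a j))"
  unfolding has_wirtinger_derivs_def
  using has_vector_derivative_cnj[OF has_wirtinger_derivsD(1)[OF assms]]
    has_vector_derivative_cnj[OF has_wirtinger_derivsD(2)[OF assms]]
  by (simp add: algebra_simps)

lemma has_wirtinger_derivs_diff:
  assumes f: "has_wirtinger_derivs f df dbf" and g: "has_wirtinger_derivs g dg dbg"
  shows "has_wirtinger_derivs (\<lambda>b. f b - g b)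
           (\<lambda>a j. df a j - dg a j) (\<lambda>a j. dbf a j - dbg a j)"
  unfolding has_wirtinger_derivs_def
  using has_vector_derivative_diff[OF has_wirtinger_derivsD(1)[OF f] has_wirtinger_derivsD(1)[OF g]]
    has_vector_derivative_diff[OF has_wirtinger_derivsD(2)[OF f] has_wirtinger_derivsD(2)[OF g]]
  by (simp add: algebra_simps)

lemma has_wirtinger_derivs_mult:
  assumes f: "has_wirtinger_derivs f df dbf" and g: "has_wirtinger_derivs g dg dbg"
  shows "has_wirtinger_derivs (\<lambda>b. f b * g b)
           (\<lambda>a j. df a j * g a + f a * dg a j) (\<lambda>a j. dbf a j * g a + f a * dbg a j)"
  unfolding has_wirtinger_derivs_def
  using has_vector_derivative_mult[OF has_wirtinger_derivsD(1)[OF f] has_wirtinger_derivsD(1)[OF g]]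
    has_vector_derivative_mult[OF has_wirtinger_derivsD(2)[OF f] has_wirtinger_derivsD(2)[OF g]]
  by (simp add: algebra_simps)

definition wirtinger_differentiable :: "((nat \<Rightarrow> complex) \<Rightarrow> complex) \<Rightarrow> bool" where
  "wirtinger_differentiable f \<longleftrightarrow> (\<exists>df dbf. has_wirtinger_derivs f df dbf)"

lemma wirtinger_differentiable_has_wirtinger_derivs:
  assumes "wirtinger_differentiable f"
  shows "has_wirtinger_derivs f (wirt f) (wirt_bar f)"
proof -
  obtain df dbf where f: "has_wirtinger_derivs f df dbf"
    using assms unfolding wirtinger_differentiable_def by blast
  have "wirt f = df" "wirt_bar f = dbf"
    using has_wirtinger_derivs_wirt[OF f] by (simp_all add: fun_eq_iff)
  with f show ?thesis by simp
qed

lemma wirtinger_differentiable_const [simp]: "wirtinger_differentiable (\<lambda>b. c)"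
  and wirtinger_differentiable_coord [simp]: "wirtinger_differentiable (\<lambda>b. b k)"
  and wirtinger_differentiable_cnj_coord [simp]: "wirtinger_differentiable (\<lambda>b. cnj (b k))"
  unfolding wirtinger_differentiable_def
  using has_wirtinger_derivs_const has_wirtinger_derivs_coord
    has_wirtinger_derivs_cnj[OF has_wirtinger_derivs_coord] by blast+

lemma wirtinger_differentiable_diff [simp]:
  "wirtinger_differentiable f \<Longrightarrow> wirtinger_differentiable g \<Longrightarrow>
     wirtinger_differentiable (\<lambda>b. f b - g b)"
  and wirtinger_differentiable_mult [simp]:
  "wirtinger_differentiable f \<Longrightarrow> wirtinger_differentiable g \<Longrightarrow>
     wirtinger_differentiable (\<lambda>b. f b * g b)"
  unfolding wirtinger_differentiable_def
  using has_wirtinger_derivs_diff has_wirtinger_derivs_mult by blast+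

lemma wirt_const [simp]: "wirt (\<lambda>b. c) a j = 0"
  and wirt_bar_const [simp]: "wirt_bar (\<lambda>b. c) a j = 0"
  using has_wirtinger_derivs_wirt[OF has_wirtinger_derivs_const] by auto

lemma wirt_coord [simp]: "wirt (\<lambda>b. b k) a j = (if j = k then 1 else 0)"
  and wirt_bar_coord [simp]: "wirt_bar (\<lambda>b. b k) a j = 0"
  using has_wirtinger_derivs_wirt[OF has_wirtinger_derivs_coord] by auto

lemma wirt_cnj_coord [simp]: "wirt (\<lambda>b. cnj (b k)) a j = 0"
  and wirt_bar_cnj_coord [simp]: "wirt_bar (\<lambda>b. cnj (b k)) a j = (if j = k then 1 else 0)"
  using has_wirtinger_derivs_wirt[OF has_wirtinger_derivs_cnj[OF has_wirtinger_derivs_coord]]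
  by (auto simp: if_distrib cong: if_cong)

lemma wirt_diff [simp]:
  assumes "wirtinger_differentiable f" and "wirtinger_differentiable g"
  shows "wirt (\<lambda>b. f b - g b) a j = wirt f a j - wirt g a j"
    and "wirt_bar (\<lambda>b. f b - g b) a j = wirt_bar f a j - wirt_bar g a j"
  using has_wirtinger_derivs_wirt[OF has_wirtinger_derivs_diff[OF
      wirtinger_differentiable_has_wirtinger_derivs[OF assms(1)]
      wirtinger_differentiable_has_wirtinger_derivs[OF assms(2)]]]
  by auto

lemma wirt_mult [simp]:
  assumes "wirtinger_differentiable f" and "wirtinger_differentiable g"
  shows "wirt (\<lambda>b. f b * g b) a j = wirt f a j * g a + f a * wirt g a j"
    and "wirt_bar (\<lambda>b. f b * g b) a j = wirt_bar f a j * g a + f a * wirt_bar g a j"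
  using has_wirtinger_derivs_wirt[OF has_wirtinger_derivs_mult[OF
      wirtinger_differentiable_has_wirtinger_derivs[OF assms(1)]
      wirtinger_differentiable_has_wirtinger_derivs[OF assms(2)]]]
  by auto

lemma wirt_eq_0_if_independent:
  assumes "\<And>x. f (a(j := x)) = f a"
  shows "wirt f a j = 0" and "wirt_bar f a j = 0"
proof -
  have "pd_re f a j = 0" "pd_im f a j = 0"
    unfolding pd_re_def pd_im_def by (simp_all add: assms vector_derivative_at)
  then show "wirt f a j = 0" "wirt_bar f a j = 0"
    unfolding wirt_def wirt_bar_def by simp_all
qed

lemma pbracket_commute: "pbracket k f g a = - pbracket k g f a"
  unfolding pbracket_def by (simp add: sum_negf[symmetric] algebra_simps)

lemma pbracket_Suc:
  "pbracket (Suc k) f g a = pbracket k f g a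
     + \<i> * (1 - a k * cnj (a k)) * (wirt_bar f a k * wirt g a k - wirt f a k * wirt_bar g a k)"
  by (simp add: pbracket_def complex_norm_square[symmetric])

lemma pbracket_linear_left:
  assumes "\<And>j. j < k \<Longrightarrow> wirt f a j = c1 * wirt f1 a j + c2 * wirt f2 a j"
    and "\<And>j. j < k \<Longrightarrow> wirt_bar f a j = c1 * wirt_bar f1 a j + c2 * wirt_bar f2 a j"
  shows "pbracket k f g a = c1 * pbracket k f1 g a + c2 * pbracket k f2 g a"
  unfolding pbracket_def sum_distrib_left sum.distrib[symmetric]
  by (rule sum.cong) (auto simp: assms algebra_simps)

lemma pbracket_linear_right:
  assumes "\<And>j. j < k \<Longrightarrow> wirt g a j = d1 * wirt g1 a j + d2 * wirt g2 a j"
    and "\<And>j. j < k \<Longrightarrow> wirt_bar g a j = d1 * wirt_bar g1 a j + d2 * wirt_bar g2 a j"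
  shows "pbracket k f g a = d1 * pbracket k f g1 a + d2 * pbracket k f g2 a"
  using pbracket_linear_left[of k g a d1 g1 d2 g2 f] assms
  by (simp add: pbracket_commute[of k f] pbracket_commute[of k _ g] algebra_simps)

lemma pbracket_bilinear:
  assumes "\<And>j. j < k \<Longrightarrow> wirt f a j = c1 * wirt f1 a j + c2 * wirt f2 a j"
    and "\<And>j. j < k \<Longrightarrow> wirt_bar f a j = c1 * wirt_bar f1 a j + c2 * wirt_bar f2 a j"
    and "\<And>j. j < k \<Longrightarrow> wirt g a j = d1 * wirt g1 a j + d2 * wirt g2 a j"
    and "\<And>j. j < k \<Longrightarrow> wirt_bar g a j = d1 * wirt_bar g1 a j + d2 * wirt_bar g2 a j"
  shows "pbracket k f g a = c1 * d1 * pbracket k f1 g1 a + c1 * d2 * pbracket k f1 g2 a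
     + c2 * d1 * pbracket k f2 g1 a + c2 * d2 * pbracket k f2 g2 a"
  using pbracket_linear_left[of k f a c1 f1 c2 f2 g] pbracket_linear_right[of k g a d1 g1 d2 g2]
    assms by (simp add: algebra_simps)

lemma coeff_rev_star: "coeff (rev_star k p) i = (if i \<le> k then cnj (coeff p (k - i)) else 0)"
  unfolding rev_star_def by (simp add: coeff_sum coeff_monom)

lemma degree_Phi: "degree (Phi a k) \<le> k"
proof (induction k)
  case (Suc k)
  have "degree (rev_star k (Phi a k)) \<le> k"
    by (rule degree_le) (simp add: coeff_rev_star)
  with Suc show ?case
    by (auto intro!: degree_diff_le degree_smult_le[THEN order.trans] simp: degree_pCons_le)
qed simp

lemma Phi_star_Suc: "Phi_star a (Suc k) = Phi_star a k - smult (a k) (pCons 0 (Phi a k))"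
proof (rule poly_eqI)
  fix i
  show "coeff (Phi_star a (Suc k)) i = coeff (Phi_star a k - smult (a k) (pCons 0 (Phi a k))) i"
  proof (cases "i \<le> Suc k")
    case True
    then show ?thesis unfolding Phi_star_def
      by (cases "i = Suc k") (auto simp: coeff_rev_star coeff_pCons Suc_diff_le split: nat.split)
  next
    case False
    then show ?thesis unfolding Phi_star_def
      using coeff_eq_0[OF degree_Phi[THEN le_less_trans]]
      by (auto simp: coeff_rev_star coeff_pCons split: nat.split)
  qed
qed

lemma Phi_cong: "(\<And>i. i < k \<Longrightarrow> a i = b i) \<Longrightarrow> Phi a k = Phi b k"
  by (induction k) auto

definition Phi_val :: "nat \<Rightarrow> complex \<Rightarrow> (nat \<Rightarrow> complex) \<Rightarrow> complex" where
  "Phi_val k z = (\<lambda>a. poly (Phi a k) z)"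

definition Phi_star_val :: "nat \<Rightarrow> complex \<Rightarrow> (nat \<Rightarrow> complex) \<Rightarrow> complex" where
  "Phi_star_val k z = (\<lambda>a. poly (Phi_star a k) z)"

lemma Phi_val_Suc:
  "Phi_val (Suc k) z = (\<lambda>a. z * Phi_val k z a - cnj (a k) * Phi_star_val k z a)"
  unfolding Phi_val_def Phi_star_val_def Phi_star_def by (simp add: fun_eq_iff)

lemma Phi_star_val_Suc:
  "Phi_star_val (Suc k) z = (\<lambda>a. Phi_star_val k z a - a k * (z * Phi_val k z a))"
  unfolding Phi_val_def Phi_star_val_def by (simp add: fun_eq_iff Phi_star_Suc)

lemma wirtinger_differentiable_Phi_val_Phi_star_val:
  "wirtinger_differentiable (Phi_val k z) \<and> wirtinger_differentiable (Phi_star_val k z)"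
proof (induction k)
  case 0
  then show ?case by (simp add: Phi_val_def Phi_star_val_def Phi_star_def rev_star_def)
next
  case (Suc k)
  then show ?case unfolding Phi_val_Suc Phi_star_val_Suc by simp
qed

lemma wirtinger_differentiable_Phi_val [simp]: "wirtinger_differentiable (Phi_val k z)"
  and wirtinger_differentiable_Phi_star_val [simp]: "wirtinger_differentiable (Phi_star_val k z)"
  using wirtinger_differentiable_Phi_val_Phi_star_val by auto

lemma wirt_Phi_val_Phi_star_val_eq_0:
  assumes "k \<le> j"
  shows "wirt (Phi_val k z) a j = 0" "wirt_bar (Phi_val k z) a j = 0"
    and "wirt (Phi_star_val k z) a j = 0" "wirt_bar (Phi_star_val k z) a j = 0"
proof -
  have "Phi (a(j := x)) k = Phi a k" for x
    by (rule Phi_cong) (use assms in auto)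
  then show "wirt (Phi_val k z) a j = 0" "wirt_bar (Phi_val k z) a j = 0"
    "wirt (Phi_star_val k z) a j = 0" "wirt_bar (Phi_star_val k z) a j = 0"
    by (auto intro!: wirt_eq_0_if_independent simp: Phi_val_def Phi_star_val_def Phi_star_def)
qed

lemma wirt_Phi_val_Suc_below:
  assumes "j < k"
  shows "wirt (Phi_val (Suc k) z) a j
           = z * wirt (Phi_val k z) a j - cnj (a k) * wirt (Phi_star_val k z) a j"
    and "wirt_bar (Phi_val (Suc k) z) a j
           = z * wirt_bar (Phi_val k z) a j - cnj (a k) * wirt_bar (Phi_star_val k z) a j"
    and "wirt (Phi_star_val (Suc k) z) a j
           = wirt (Phi_star_val k z) a j - a k * z * wirt (Phi_val k z) a j"
    and "wirt_bar (Phi_star_val (Suc k) z) a j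
           = wirt_bar (Phi_star_val k z) a j - a k * z * wirt_bar (Phi_val k z) a j"
  using assms unfolding Phi_val_Suc Phi_star_val_Suc by simp_all

lemma wirt_Phi_val_Suc_last:
  "wirt (Phi_val (Suc k) z) a k = 0"
  "wirt_bar (Phi_val (Suc k) z) a k = - Phi_star_val k z a"
  "wirt (Phi_star_val (Suc k) z) a k = - (z * Phi_val k z a)"
  "wirt_bar (Phi_star_val (Suc k) z) a k = 0"
  unfolding Phi_val_Suc Phi_star_val_Suc by (simp_all add: wirt_Phi_val_Phi_star_val_eq_0)

definition Phi_det :: "nat \<Rightarrow> complex \<Rightarrow> complex \<Rightarrow> (nat \<Rightarrow> complex) \<Rightarrow> complex" where
  "Phi_det k z w a = Phi_val k z a * Phi_star_val k w a - Phi_val k w a * Phi_star_val k z a"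

lemma Phi_det_Suc:
  "Phi_det (Suc k) z w a = (1 - a k * cnj (a k))
     * (z * Phi_val k z a * Phi_star_val k w a - w * Phi_val k w a * Phi_star_val k z a)"
  unfolding Phi_det_def Phi_val_Suc Phi_star_val_Suc by algebra

lemma pbracket_Phi_val_Phi_star_val_swap:
  assumes "(z - w) * pbracket k (Phi_val k z) (Phi_star_val k w) a = \<i> * w * Phi_det k z w a"
    and "(w - z) * pbracket k (Phi_val k w) (Phi_star_val k z) a = \<i> * z * Phi_det k w z a"
  shows "z * pbracket k (Phi_val k z) (Phi_star_val k w) a
           = w * pbracket k (Phi_val k w) (Phi_star_val k z) a"
    (is "z * ?X = w * ?X'")
proof (cases "z = w")
  case False
  have "(z - w) * (z * ?X - w * ?X') = z * ((z - w) * ?X) + w * ((w - z) * ?X')"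
    by algebra
  also have "\<dots> = 0"
    unfolding assms Phi_det_def by algebra
  finally show ?thesis
    using False by simp
qed simp

lemma pbracket_Phi_val_Suc:
  assumes "pbracket k (Phi_val k z) (Phi_val k w) a = 0"
    and "pbracket k (Phi_star_val k z) (Phi_star_val k w) a = 0"
    and "z * pbracket k (Phi_val k z) (Phi_star_val k w) a
           = w * pbracket k (Phi_val k w) (Phi_star_val k z) a"
  shows "pbracket (Suc k) (Phi_val (Suc k) z) (Phi_val (Suc k) w) a = 0"
proof -
  have "pbracket k (Phi_val (Suc k) z) (Phi_val (Suc k) w) a
      = z * w * pbracket k (Phi_val k z) (Phi_val k w) a
        + z * (- cnj (a k)) * pbracket k (Phi_val k z) (Phi_star_val k w) a
        + (- cnj (a k)) * w * pbracket k (Phi_star_val k z) (Phi_val k w) a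
        + (- cnj (a k)) * (- cnj (a k)) * pbracket k (Phi_star_val k z) (Phi_star_val k w) a"
    by (rule pbracket_bilinear) (simp_all add: wirt_Phi_val_Suc_below)
  also have "\<dots> = 0"
    using assms pbracket_commute[of k "Phi_star_val k z" "Phi_val k w" a]
    by (simp add: algebra_simps)
  finally show ?thesis
    unfolding pbracket_Suc by (simp add: wirt_Phi_val_Suc_last)
qed

lemma pbracket_Phi_star_val_Suc:
  assumes "pbracket k (Phi_val k z) (Phi_val k w) a = 0"
    and "pbracket k (Phi_star_val k z) (Phi_star_val k w) a = 0"
    and "z * pbracket k (Phi_val k z) (Phi_star_val k w) a
           = w * pbracket k (Phi_val k w) (Phi_star_val k z) a"
  shows "pbracket (Suc k) (Phi_star_val (Suc k) z) (Phi_star_val (Suc k) w) a = 0"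
proof -
  have "pbracket k (Phi_star_val (Suc k) z) (Phi_star_val (Suc k) w) a
      = 1 * 1 * pbracket k (Phi_star_val k z) (Phi_star_val k w) a
        + 1 * (- (a k * w)) * pbracket k (Phi_star_val k z) (Phi_val k w) a
        + (- (a k * z)) * 1 * pbracket k (Phi_val k z) (Phi_star_val k w) a
        + (- (a k * z)) * (- (a k * w)) * pbracket k (Phi_val k z) (Phi_val k w) a"
    by (rule pbracket_bilinear) (simp_all add: wirt_Phi_val_Suc_below)
  also have "\<dots> = 0"
    using assms pbracket_commute[of k "Phi_star_val k z" "Phi_val k w" a]
    by (simp add: algebra_simps)
  finally show ?thesis
    unfolding pbracket_Suc by (simp add: wirt_Phi_val_Suc_last)
qed

lemma pbracket_Phi_val_Phi_star_val_Suc: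
  assumes "pbracket k (Phi_val k z) (Phi_val k w) a = 0"
    and "pbracket k (Phi_star_val k z) (Phi_star_val k w) a = 0"
    and mixed: "(z - w) * pbracket k (Phi_val k z) (Phi_star_val k w) a = \<i> * w * Phi_det k z w a"
    and mixed': "(w - z) * pbracket k (Phi_val k w) (Phi_star_val k z) a = \<i> * z * Phi_det k w z a"
  shows "(z - w) * pbracket (Suc k) (Phi_val (Suc k) z) (Phi_star_val (Suc k) w) a
           = \<i> * w * Phi_det (Suc k) z w a"
proof -
  have expansion: "pbracket k (Phi_val (Suc k) z) (Phi_star_val (Suc k) w) a
      = z * 1 * pbracket k (Phi_val k z) (Phi_star_val k w) a
        + z * (- (a k * w)) * pbracket k (Phi_val k z) (Phi_val k w) a
        + (- cnj (a k)) * 1 * pbracket k (Phi_star_val k z) (Phi_star_val k w) a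
        + (- cnj (a k)) * (- (a k * w)) * pbracket k (Phi_star_val k z) (Phi_val k w) a"
    by (rule pbracket_bilinear) (simp_all add: wirt_Phi_val_Suc_below)
  have "(z - w) * pbracket (Suc k) (Phi_val (Suc k) z) (Phi_star_val (Suc k) w) a
      = z * ((z - w) * pbracket k (Phi_val k z) (Phi_star_val k w) a)
        + cnj (a k) * a k * w * ((w - z) * pbracket k (Phi_val k w) (Phi_star_val k z) a)
        + (z - w) * (\<i> * (1 - a k * cnj (a k)) * (Phi_star_val k z a * (w * Phi_val k w a)))"
    using assms(1,2) pbracket_commute[of k "Phi_star_val k z" "Phi_val k w" a]
    unfolding pbracket_Suc expansion by (simp add: wirt_Phi_val_Suc_last algebra_simps)
  also have "\<dots> = \<i> * w * Phi_det (Suc k) z w a"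
    unfolding mixed mixed' Phi_det_Suc unfolding Phi_det_def by algebra
  finally show ?thesis .
qed

lemma pbracket_Phi_val_Phi_star_val:
  "pbracket k (Phi_val k z) (Phi_val k w) a = 0
   \<and> pbracket k (Phi_star_val k z) (Phi_star_val k w) a = 0
   \<and> (z - w) * pbracket k (Phi_val k z) (Phi_star_val k w) a = \<i> * w * Phi_det k z w a"
proof (induction k arbitrary: z w)
  case 0
  then show ?case
    by (simp add: pbracket_def Phi_det_def Phi_val_def Phi_star_val_def Phi_star_def rev_star_def)
next
  case (Suc k)
  have swap: "z * pbracket k (Phi_val k z) (Phi_star_val k w) a
                = w * pbracket k (Phi_val k w) (Phi_star_val k z) a"
    using Suc.IH[of z w] Suc.IH[of w z] by (intro pbracket_Phi_val_Phi_star_val_swap) auto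
  show ?case
    using Suc.IH[of z w] Suc.IH[of w z] swap
    by (simp add: pbracket_Phi_val_Suc pbracket_Phi_star_val_Suc pbracket_Phi_val_Phi_star_val_Suc)
qed

lemma pbracket_Phi_val_Phi_star_val_eq:
  assumes "z \<noteq> w"
  shows "pbracket k (Phi_val k z) (Phi_star_val k w) a = \<i> * w * Phi_det k z w a / (z - w)"
  using pbracket_Phi_val_Phi_star_val[of k z w a] assms by (simp add: eq_divide_eq mult.commute)

lemma pbracket_Phi_val_Phi_val_Suc:
  assumes "z \<noteq> w"
  shows "pbracket (Suc k) (Phi_val k z) (Phi_val (Suc k) w) a
           = - \<i> * cnj (a k) * w * Phi_det k z w a / (z - w)"
proof -
  have "pbracket k (Phi_val k z) (Phi_val (Suc k) w) a
      = w * pbracket k (Phi_val k z) (Phi_val k w) a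
        - cnj (a k) * pbracket k (Phi_val k z) (Phi_star_val k w) a"
    using pbracket_linear_right[of k "Phi_val (Suc k) w" a w "Phi_val k w" "- cnj (a k)"]
    by (simp add: wirt_Phi_val_Suc_below)
  then show ?thesis
    using pbracket_Phi_val_Phi_star_val[of k z w a] pbracket_Phi_val_Phi_star_val_eq[OF assms]
    unfolding pbracket_Suc by (simp add: wirt_Phi_val_Suc_last wirt_Phi_val_Phi_star_val_eq_0)
qed

lemma pbracket_Phi_val_Suc_Phi_star_val:
  assumes "z \<noteq> w"
  shows "pbracket (Suc k) (Phi_val (Suc k) z) (Phi_star_val k w) a
           = \<i> * z * w * Phi_det k z w a / (z - w)"
proof -
  have "pbracket k (Phi_val (Suc k) z) (Phi_star_val k w) a
      = z * pbracket k (Phi_val k z) (Phi_star_val k w) a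
        - cnj (a k) * pbracket k (Phi_star_val k z) (Phi_star_val k w) a"
    using pbracket_linear_left[of k "Phi_val (Suc k) z" a z "Phi_val k z" "- cnj (a k)"]
    by (simp add: wirt_Phi_val_Suc_below)
  then show ?thesis
    using pbracket_Phi_val_Phi_star_val[of k z w a] pbracket_Phi_val_Phi_star_val_eq[OF assms]
    unfolding pbracket_Suc by (simp add: wirt_Phi_val_Suc_last wirt_Phi_val_Phi_star_val_eq_0)
qed

theorem theorem13p6:
  fixes n :: nat and a :: "nat \<Rightarrow> complex" and z w :: complex
  assumes "n \<ge> 1"
    and "\<forall>j<n. cmod (a j) < 1"
    and "z \<noteq> w"
  shows "pbracket n (\<lambda>b. poly (Phi b (n - 1)) z) (\<lambda>b. poly (Phi b n) w) a
           = - \<i> * cnj (a (n - 1)) * w *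
             (poly (Phi a (n - 1)) z * poly (Phi_star a (n - 1)) w
              - poly (Phi a (n - 1)) w * poly (Phi_star a (n - 1)) z) / (z - w)
       \<and> pbracket n (\<lambda>b. poly (Phi b n) z) (\<lambda>b. poly (Phi_star b (n - 1)) w) a
           = \<i> * z * w *
             (poly (Phi a (n - 1)) z * poly (Phi_star a (n - 1)) w
              - poly (Phi a (n - 1)) w * poly (Phi_star a (n - 1)) z) / (z - w)"
proof -
  \<comment> \<open>The identities are polynomial.\<close>
  obtain k where n: "n = Suc k"
    using assms(1) by (cases n) auto
  show ?thesis
    using pbracket_Phi_val_Phi_val_Suc[OF assms(3), of k a]
      pbracket_Phi_val_Suc_Phi_star_val[OF assms(3), of k a]
    unfolding n Phi_det_def Phi_val_def Phi_star_val_def by simp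
qed

end
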